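(* For $0\le S\le S'$, one has $B^*(S')\le B^*(S)$; that is, increasing the solar panel size does not increase the minimum required battery capacity.
   Context: Fix a macro base station and a horizon of $N$ time slots. Let $e(k)\ge 0$ be the solar energy generated per unit panel area in slot $k$, $p(k)\ge 0$ the base station's energy consumption in slot $k$, and $\alpha(k)\in[0,1]$ the required green-energy fraction in slot $k$, $k=1,\dots,N$. For a panel size $S\ge0$ and battery capacity $B\ge 0$, the battery energy evolves as $b(0)=0$ and $$b(k)=\min\{\max\{b(k-1)+e(k)S-p(k),\,0\},\,B\},\quad k=1,\dots,N.$$ The pair $(S,B)$ is feasible if $b(k-1)+e(k)S\ge \alpha(k)p(k)$ for all $k=1,\dots,N$. The required battery capacity for panel size $S$ is $B^*(S)=\inf\{B\ge 0:(S,B)\text{ feasible}\}$, with $B^*(S)=+\infty$ if no such $B$ exists. *)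

theory Defs
  imports "HOL-Analysis.Analysis"
begin

fun battery :: "(nat \<Rightarrow> real) \<Rightarrow> (nat \<Rightarrow> real) \<Rightarrow> real \<Rightarrow> real \<Rightarrow> nat \<Rightarrow> real" where
  "battery e p S B 0 = 0"
| "battery e p S B (Suc k) = min (max (battery e p S B k + e (Suc k) * S - p (Suc k)) 0) B"

definition feasible :: "nat \<Rightarrow> (nat \<Rightarrow> real) \<Rightarrow> (nat \<Rightarrow> real) \<Rightarrow> (nat \<Rightarrow> real) \<Rightarrow> real \<Rightarrow> real \<Rightarrow> bool" where
  "feasible N e p \<alpha> S B \<longleftrightarrow>
     (\<forall>k\<in>{1..N}. battery e p S B (k - 1) + e k * S \<ge> \<alpha> k * p k)"

text \<open>Required battery capacity B*(S) as an extended real; Inf of the empty set is +\<infinity>.\<close>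
definition req_battery :: "nat \<Rightarrow> (nat \<Rightarrow> real) \<Rightarrow> (nat \<Rightarrow> real) \<Rightarrow> (nat \<Rightarrow> real) \<Rightarrow> real \<Rightarrow> ereal" where
  "req_battery N e p \<alpha> S = Inf (ereal ` {B. B \<ge> 0 \<and> feasible N e p \<alpha> S B})"

end

theory Submission
  imports Defs
begin

(* A larger solar panel never leaves less energy in the battery.  Each battery
   update b(k) = min (max (b(k-1) + e(k) S - p(k)) 0) B is monotone both in the
   previous level and in S (as e(k) >= 0), so by induction on k the battery level
   for panel size S' >= S dominates the one for S, for every capacity B.  Hence
   every capacity that is feasible for S is also feasible for S': the set of
   feasible capacities grows with S, and its infimum B*(S) can only decrease. *)

lemma battery_mono_panel:
  fixes e p :: "nat \<Rightarrow> real" and S S' B :: real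
  assumes e_nonneg: "\<And>k. k \<in> {1..N} \<Longrightarrow> e k \<ge> 0" and "S \<le> S'" and "k \<le> N"
  shows "battery e p S B k \<le> battery e p S' B k"
  using \<open>k \<le> N\<close>
proof (induction k)
  case 0
  then show ?case by simp
next
  case (Suc k)
  have "e (Suc k) * S \<le> e (Suc k) * S'"
    using e_nonneg[of "Suc k"] Suc.prems \<open>S \<le> S'\<close> by (simp add: mult_left_mono)
  moreover have "battery e p S B k \<le> battery e p S' B k"
    using Suc by simp
  ultimately show ?case by (simp add: min_def max_def)
qed

lemma feasible_mono_panel:
  fixes e p \<alpha> :: "nat \<Rightarrow> real" and S S' B :: real
  assumes e_nonneg: "\<And>k. k \<in> {1..N} \<Longrightarrow> e k \<ge> 0" and "S \<le> S'"
    and "feasible N e p \<alpha> S B"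
  shows "feasible N e p \<alpha> S' B"
  unfolding feasible_def
proof
  fix k assume k: "k \<in> {1..N}"
  have "\<alpha> k * p k \<le> battery e p S B (k - 1) + e k * S"
    using \<open>feasible N e p \<alpha> S B\<close> k unfolding feasible_def by blast
  also have "\<dots> \<le> battery e p S' B (k - 1) + e k * S'"
  proof (rule add_mono)
    show "battery e p S B (k - 1) \<le> battery e p S' B (k - 1)"
      using battery_mono_panel[OF e_nonneg \<open>S \<le> S'\<close>] k by auto
    show "e k * S \<le> e k * S'"
      using e_nonneg[OF k] \<open>S \<le> S'\<close> by (simp add: mult_left_mono)
  qed
  finally show "\<alpha> k * p k \<le> battery e p S' B (k - 1) + e k * S'" .
qed

theorem lemma2:
  fixes N :: nat and e p \<alpha> :: "nat \<Rightarrow> real" and S S' :: real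
  assumes "\<And>k. k \<in> {1..N} \<Longrightarrow> e k \<ge> 0"
    and "\<And>k. k \<in> {1..N} \<Longrightarrow> p k \<ge> 0"
    and "\<And>k. k \<in> {1..N} \<Longrightarrow> 0 \<le> \<alpha> k \<and> \<alpha> k \<le> 1"
    and "0 \<le> S" and "S \<le> S'"
  shows "req_battery N e p \<alpha> S' \<le> req_battery N e p \<alpha> S"
proof -
  have "{B. B \<ge> 0 \<and> feasible N e p \<alpha> S B} \<subseteq> {B. B \<ge> 0 \<and> feasible N e p \<alpha> S' B}"
    using feasible_mono_panel[of N e S S' p \<alpha>, OF assms(1) assms(5)] by blast
  then show ?thesis
    unfolding req_battery_def by (intro Inf_superset_mono image_mono)
qed

end
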